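(* Let $X$ be a Banach space, let $\varepsilon\in(0,1)$ and let $T$ be an $\varepsilon$-hypercyclic bounded linear operator on $X$. Then $T$ is cyclic.
   Context: $T$ is $\varepsilon$-hypercyclic if there is $x\in X$ such that for every $y\in X\setminus\{0\}$ there is $n\in\mathbb{N}$ with $\|T^nx-y\|\le\varepsilon\|y\|$. $T$ is cyclic if there exists $x\in X$ such that the linear span of $\{T^nx:n\in\mathbb{N}\}$ is dense in $X$. *)

theory Defs
  imports "HOL-Analysis.Analysis"
begin

definition eps_hypercyclic :: "real \<Rightarrow> ('a::real_normed_vector \<Rightarrow> 'a) \<Rightarrow> bool" where
  "eps_hypercyclic \<epsilon> T \<longleftrightarrow>
     (\<exists>x. \<forall>y. y \<noteq> 0 \<longrightarrow> (\<exists>n::nat. norm ((T ^^ n) x - y) \<le> \<epsilon> * norm y))"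

definition cyclic :: "('a::real_normed_vector \<Rightarrow> 'a) \<Rightarrow> bool" where
  "cyclic T \<longleftrightarrow> (\<exists>x. closure (span (range (\<lambda>n::nat. (T ^^ n) x))) = UNIV)"

end

theory Submission
  imports Defs
begin

text \<open>If \<open>x\<close> witnesses \<open>\<epsilon>\<close>-hypercyclicity, the span \<open>S\<close> of its orbit
  approximates every nonzero vector with relative error \<open>\<epsilon> < 1\<close>. Such a subspace is dense:
  if \<open>y\<close> had distance \<open>d > 0\<close> from \<open>S\<close>, then for every \<open>m \<in> S\<close> approximating the error
  \<open>y - m\<close> by some \<open>s \<in> S\<close> gives \<open>d \<le> dist y (m + s) \<le> \<epsilon> * dist y m\<close>, whence \<open>d \<le> \<epsilon> * d\<close>.\<close>

lemma dense_subspace_if_relative_approximation: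
  fixes S :: "'a::real_normed_vector set"
  assumes "subspace S" and "\<epsilon> < 1"
    and approx: "\<And>y. y \<noteq> 0 \<Longrightarrow> \<exists>s\<in>S. norm (s - y) \<le> \<epsilon> * norm y"
  shows "closure S = UNIV"
proof (rule ccontr)
  assume "closure S \<noteq> UNIV"
  then obtain y where y: "y \<notin> closure S" by blast
  have "S \<noteq> {}" using \<open>subspace S\<close> subspace_0 by blast
  define d where "d = infdist y S"
  have "d > 0"
    using y in_closure_iff_infdist_zero[OF \<open>S \<noteq> {}\<close>, of y] infdist_nonneg[of y S]
    unfolding d_def by linarith
  have d_le: "d \<le> \<epsilon> * dist y m" if "m \<in> S" for m
  proof -
    have "y \<noteq> m" using y that closure_subset by blast
    then obtain s where "s \<in> S" and s: "norm (s - (y - m)) \<le> \<epsilon> * norm (y - m)"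
      using approx[of "y - m"] by auto
    have "m + s \<in> S" using \<open>subspace S\<close> \<open>m \<in> S\<close> \<open>s \<in> S\<close> subspace_add by blast
    then have "d \<le> dist y (m + s)" unfolding d_def by (rule infdist_le)
    also have "dist y (m + s) = norm (s - (y - m))"
      by (simp add: dist_norm norm_minus_commute algebra_simps)
    finally show ?thesis using s by (simp add: dist_norm)
  qed
  have "\<epsilon> > 0"
    using d_le[OF subspace_0[OF \<open>subspace S\<close>]] \<open>d > 0\<close> zero_le_dist[of y 0]
    by (smt (verit) mult_nonpos_nonneg)
  have "d / \<epsilon> \<le> infdist y S"
    unfolding infdist_notempty[OF \<open>S \<noteq> {}\<close>]
  proof (rule cINF_greatest[OF \<open>S \<noteq> {}\<close>])
    show "d / \<epsilon> \<le> dist y m" if "m \<in> S" for m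
      using d_le[OF that] \<open>\<epsilon> > 0\<close> by (simp add: pos_divide_le_eq mult.commute)
  qed
  then show False
    unfolding d_def[symmetric] using \<open>d > 0\<close> \<open>\<epsilon> > 0\<close> \<open>\<epsilon> < 1\<close> by (simp add: pos_divide_le_eq)
qed

theorem proposition6p2:
  fixes T :: "'a::banach \<Rightarrow> 'a" and \<epsilon> :: real
  assumes "bounded_linear T"
    and "0 < \<epsilon>" and "\<epsilon> < 1"
    and "eps_hypercyclic \<epsilon> T"
  shows "cyclic T"
proof -
  obtain x where x: "\<And>y. y \<noteq> 0 \<Longrightarrow> \<exists>n::nat. norm ((T ^^ n) x - y) \<le> \<epsilon> * norm y"
    using assms(4) unfolding eps_hypercyclic_def by blast
  have "closure (span (range (\<lambda>n::nat. (T ^^ n) x))) = UNIV"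
  proof (rule dense_subspace_if_relative_approximation)
    show "\<exists>s\<in>span (range (\<lambda>n. (T ^^ n) x)). norm (s - y) \<le> \<epsilon> * norm y" if "y \<noteq> 0" for y
      using x[OF that] by (blast intro: span_base)
  qed (simp_all add: \<open>\<epsilon> < 1\<close>)
  then show ?thesis unfolding cyclic_def by blast
qed

end
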